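(* Let $\mathcal{T}$ be a finite set, $\mathcal{S}=\mathcal{T}^D$, $x_1\in\mathcal{S}$. Suppose for each $i$ the conditional velocity $u^i_t(\cdot,\cdot|x_1^i)$ on $\mathcal{T}$ satisfies the Rate Conditions and generates a conditional probability path $p_t(x^i|x_1^i)$ with $p_0(\cdot|x_1^i)=p$ and $p_1(\cdot|x_1^i)=\delta_{x_1^i}$; set $p_t(x|x_1)=\prod_ip_t(x^i|x_1^i)$. Let $p^\theta_1$ be the law at time $1$ of the CTMC on $\mathcal{S}$ started from $\prod_i p(x^i)$ with single-variable-change velocity $u_t(x,z)=\sum_{i=1}^Du^i_t(x^i,z)\prod_{j\neq i}\delta_{z^j}(x^j)$, where each $u^i_t(\cdot,z)$ satisfies the Rate Conditions and $u^i_t(y,z)>0$ whenever $u^i_t(y,z^i|x_1^i)>0$ for $y\neq z^i$. Then $$\log p^\theta_1(x_1)\ge\int_0^1\mathbb{E}_{x_t\sim p_t(\cdot|x_1)}\sum_{i=1}^D\Big[u^i_t(x_t^i,x_t)-u^i_t(x_t^i,x_t^i|x_1^i)+\sum_{y^i\ne x_t^i}u^i_t(y^i,x_t^i|x_1^i)\log\frac{u^i_t(y^i,x_t)}{u^i_t(y^i,x_t^i|x_1^i)}\Big]dt.$$ *)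

theory Defs
  imports "HOL-Analysis.Analysis"
begin

definition rate_at :: "('a::finite \<Rightarrow> real) \<Rightarrow> 'a \<Rightarrow> bool" where
  "rate_at r x \<longleftrightarrow> (\<forall>y. y \<noteq> x \<longrightarrow> 0 \<le> r y) \<and> (\<Sum>y\<in>UNIV. r y) = 0"

text \<open>Rate Conditions for a time-dependent velocity u t y x (rate from x to y) on [0,1).\<close>
definition rate_conditions :: "(real \<Rightarrow> 'a::finite \<Rightarrow> 'a \<Rightarrow> real) \<Rightarrow> bool" where
  "rate_conditions u \<longleftrightarrow> (\<forall>t\<in>{0..<1}. \<forall>x. rate_at (\<lambda>y. u t y x) x)"

definition prob_path :: "(real \<Rightarrow> 'a::finite \<Rightarrow> real) \<Rightarrow> bool" where
  "prob_path p \<longleftrightarrow> (\<forall>t\<in>{0..1}. (\<forall>x. 0 \<le> p t x) \<and> (\<Sum>x\<in>UNIV. p t x) = 1)"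

text \<open>The velocity u (continuous in t on [0,1)) generates the probability path p:
  p is the marginal of the CTMC with rates u, i.e. p is continuous on [0,1] and
  solves the Kolmogorov forward equation on [0,1).\<close>
definition generates :: "(real \<Rightarrow> 'a::finite \<Rightarrow> 'a \<Rightarrow> real) \<Rightarrow> (real \<Rightarrow> 'a \<Rightarrow> real) \<Rightarrow> bool" where
  "generates u p \<longleftrightarrow>
     (\<forall>y x. continuous_on {0..<1} (\<lambda>t. u t y x)) \<and>
     prob_path p \<and>
     (\<forall>x. continuous_on {0..1} (\<lambda>t. p t x)) \<and>
     (\<forall>t\<in>{0..<1}. \<forall>x. ((\<lambda>s. p s x) has_real_derivative (\<Sum>z\<in>UNIV. u t x z * p t z))
                          (at t within {0..1}))"

definition factorized_velocity ::
  "('d::finite \<Rightarrow> real \<Rightarrow> 'a::finite \<Rightarrow> ('d \<Rightarrow> 'a) \<Rightarrow> real) \<Rightarrow> real \<Rightarrow> ('d \<Rightarrow> 'a) \<Rightarrow> ('d \<Rightarrow> 'a) \<Rightarrow> real" where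
  "factorized_velocity u t x z =
     (\<Sum>i\<in>UNIV. u i t (x i) z * (\<Prod>j\<in>UNIV - {i}. if x j = z j then 1 else 0))"

definition product_path :: "('d::finite \<Rightarrow> real \<Rightarrow> 'a \<Rightarrow> real) \<Rightarrow> real \<Rightarrow> ('d \<Rightarrow> 'a) \<Rightarrow> real" where
  "product_path pc t x = (\<Prod>i\<in>UNIV. pc i t (x i))"

end

theory Submission
  imports Defs
begin

text \<open>
  Compare the reference chain (rates A, marginals P; here the product of the conditional chains)
  with the model chain (rates B, marginals q), both started from the same law. For s < 1 and
  e > 0 let h solve the backward Kolmogorov equation of B on [0,s] with terminal value
  \<delta>(x1) + e. The pairing \<Sum>z. q t z * h t z does not depend on t, so it equals q s x1 + e,
  while \<Sum>z. P t z * ln (h t z) grows at most at the expected KL rate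
  \<Sum>z. P t z * \<Sum>x\<noteq>z. KL(A t x z, B t x z), because KL(a, b) \<ge> a ln r - b r + b for every r > 0.
  Jensen's inequality at time 0 and the limits s \<rightarrow> 1, e \<rightarrow> 0 then bound ln (q 1 x1) from below
  by minus the integrated KL rate. A factorized velocity changes one coordinate per jump, so its
  KL rate splits into the coordinatewise sum appearing in the theorem.
\<close>

lemma rate_at_nonneg: "rate_at r x \<Longrightarrow> y \<noteq> x \<Longrightarrow> 0 \<le> r y"
  and rate_at_sum: "rate_at r x \<Longrightarrow> (\<Sum>y\<in>UNIV. r y) = 0"
  by (simp_all add: rate_at_def)

lemma rate_conditionsD: "rate_conditions u \<Longrightarrow> t \<in> {0..<1} \<Longrightarrow> rate_at (\<lambda>y. u t y x) x"
  by (simp add: rate_conditions_def)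

lemma
  assumes "generates u p"
  shows generates_continuous_rate: "continuous_on {0..<1} (\<lambda>t. u t y x)"
    and generates_nonneg: "t \<in> {0..1} \<Longrightarrow> 0 \<le> p t x"
    and generates_sum: "t \<in> {0..1} \<Longrightarrow> (\<Sum>x\<in>UNIV. p t x) = 1"
    and generates_continuous: "continuous_on {0..1} (\<lambda>t. p t x)"
    and generates_has_derivative: "t \<in> {0..<1} \<Longrightarrow>
          ((\<lambda>s. p s x) has_real_derivative (\<Sum>z\<in>UNIV. u t x z * p t z)) (at t within {0..1})"
  using assms by (auto simp: generates_def prob_path_def)

lemma integral_exp_growth:
  fixes t s L :: real
  assumes "t \<le> s"
  shows "integral {t..s} (\<lambda>\<tau>. L * exp (L * (s - \<tau>))) = exp (L * (s - t)) - 1"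
proof -
  have "((\<lambda>\<tau>. L * exp (L * (s - \<tau>))) has_integral (- exp (L * (s - s))) - (- exp (L * (s - t)))) {t..s}"
  proof (rule fundamental_theorem_of_calculus[OF assms])
    fix x assume "x \<in> {t..s}"
    have "((\<lambda>\<tau>. - exp (L * (s - \<tau>))) has_real_derivative L * exp (L * (s - x))) (at x within {t..s})"
      by (auto intro!: derivative_eq_intros)
    then show "((\<lambda>\<tau>. - exp (L * (s - \<tau>))) has_vector_derivative L * exp (L * (s - x))) (at x within {t..s})"
      by (simp add: has_real_derivative_iff_has_vector_derivative)
  qed
  then have "((\<lambda>\<tau>. L * exp (L * (s - \<tau>))) has_integral exp (L * (s - t)) - 1) {t..s}"
    by simp
  then show ?thesis by (rule integral_unique)
qed

locale backward_picard =
  fixes N :: "real \<Rightarrow> 's::finite \<Rightarrow> 's \<Rightarrow> real" and c :: "'s \<Rightarrow> real" and s L :: real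
  assumes s_nonneg: "0 \<le> s" and L_nonneg: "0 \<le> L"
    and N_cont: "\<And>z x. continuous_on {0..s} (\<lambda>t. N t z x)"
    and N_nonneg: "\<And>t z x. t \<in> {0..s} \<Longrightarrow> 0 \<le> N t z x"
    and N_row_sum: "\<And>t z. t \<in> {0..s} \<Longrightarrow> (\<Sum>x\<in>UNIV. N t z x) \<le> L"
    and c_nonneg: "\<And>z. 0 \<le> c z" and c_le_1: "\<And>z. c z \<le> 1"
begin

fun picard :: "nat \<Rightarrow> real \<Rightarrow> 's \<Rightarrow> real" where
  "picard 0 t z = c z"
| "picard (Suc n) t z = c z + integral {t..s} (\<lambda>\<tau>. \<Sum>x\<in>UNIV. N \<tau> z x * picard n \<tau> x)"

lemma picard_continuous: "continuous_on {0..s} (\<lambda>t. picard n t z)"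
proof (induction n arbitrary: z)
  case (Suc n)
  have "continuous_on {0..s} (\<lambda>\<tau>. \<Sum>x\<in>UNIV. N \<tau> z x * picard n \<tau> x)"
    by (intro continuous_on_sum continuous_on_mult N_cont Suc.IH)
  then show ?case
    by (auto intro!: continuous_on_add indefinite_integral_continuous_1' integrable_continuous_real)
qed simp

lemma picard_rhs_integrable:
  assumes "0 \<le> t"
  shows "(\<lambda>\<tau>. \<Sum>x\<in>UNIV. N \<tau> z x * picard n \<tau> x) integrable_on {t..s}"
proof -
  have "continuous_on {0..s} (\<lambda>\<tau>. \<Sum>x\<in>UNIV. N \<tau> z x * picard n \<tau> x)"
    by (intro continuous_on_sum continuous_on_mult N_cont picard_continuous)
  then show ?thesis
    by (rule integrable_continuous_real[OF continuous_on_subset]) (use assms in auto)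
qed

lemma picard_bounds:
  assumes "t \<in> {0..s}"
  shows "0 \<le> picard n t z \<and> picard n t z \<le> exp (L * (s - t))"
  using assms
proof (induction n arbitrary: t z)
  case 0
  have "1 \<le> exp (L * (s - t))" using 0 L_nonneg by simp
  then show ?case using c_nonneg[of z] c_le_1[of z] by (simp del: one_le_exp_iff)
next
  case (Suc n)
  let ?F = "\<lambda>\<tau>. \<Sum>x\<in>UNIV. N \<tau> z x * picard n \<tau> x"
  have "0 \<le> integral {t..s} ?F"
    using Suc by (intro integral_nonneg picard_rhs_integrable)
      (auto intro!: sum_nonneg mult_nonneg_nonneg N_nonneg)
  moreover have "integral {t..s} ?F \<le> integral {t..s} (\<lambda>\<tau>. L * exp (L * (s - \<tau>)))"
  proof (rule integral_le)
    show "?F integrable_on {t..s}" using Suc.prems by (intro picard_rhs_integrable) auto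
    show "(\<lambda>\<tau>. L * exp (L * (s - \<tau>))) integrable_on {t..s}"
      by (intro integrable_continuous_real continuous_intros)
    fix \<tau> assume "\<tau> \<in> {t..s}"
    then have \<tau>: "\<tau> \<in> {0..s}" using Suc.prems by auto
    have "?F \<tau> \<le> (\<Sum>x\<in>UNIV. N \<tau> z x * exp (L * (s - \<tau>)))"
      using \<tau> Suc.IH by (intro sum_mono mult_left_mono N_nonneg) auto
    also have "\<dots> \<le> L * exp (L * (s - \<tau>))"
      using N_row_sum[OF \<tau>, of z] by (simp add: sum_distrib_right[symmetric])
    finally show "?F \<tau> \<le> L * exp (L * (s - \<tau>))" .
  qed
  moreover have "integral {t..s} (\<lambda>\<tau>. L * exp (L * (s - \<tau>))) = exp (L * (s - t)) - 1"
    using Suc.prems by (intro integral_exp_growth) auto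
  ultimately show ?case using c_nonneg[of z] c_le_1[of z] by simp
qed

lemma picard_mono:
  assumes "t \<in> {0..s}"
  shows "picard n t z \<le> picard (Suc n) t z"
  using assms
proof (induction n arbitrary: t z)
  case 0
  have "0 \<le> integral {t..s} (\<lambda>\<tau>. \<Sum>x\<in>UNIV. N \<tau> z x * picard 0 \<tau> x)"
    using 0 by (intro integral_nonneg picard_rhs_integrable)
      (auto intro!: sum_nonneg mult_nonneg_nonneg N_nonneg c_nonneg)
  then show ?case by simp
next
  case (Suc n)
  have "integral {t..s} (\<lambda>\<tau>. \<Sum>x\<in>UNIV. N \<tau> z x * picard n \<tau> x)
      \<le> integral {t..s} (\<lambda>\<tau>. \<Sum>x\<in>UNIV. N \<tau> z x * picard (Suc n) \<tau> x)"
    using Suc by (intro integral_le picard_rhs_integrable)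
      (auto intro!: sum_mono mult_left_mono N_nonneg)
  then show ?case by (subst (1 2) picard.simps) simp
qed

definition picard_limit :: "real \<Rightarrow> 's \<Rightarrow> real" where
  "picard_limit t z = (SUP n. picard n t z)"

lemma picard_tendsto:
  assumes "t \<in> {0..s}"
  shows "(\<lambda>n. picard n t z) \<longlonglongrightarrow> picard_limit t z"
  unfolding picard_limit_def
proof (rule LIMSEQ_incseq_SUP)
  show "bdd_above (range (\<lambda>n. picard n t z))"
    using picard_bounds[OF assms] by (intro bdd_aboveI[of _ "exp (L * (s - t))"]) auto
  show "incseq (\<lambda>n. picard n t z)" using picard_mono[OF assms] by (intro incseq_SucI) auto
qed

lemma picard_limit_nonneg: "t \<in> {0..s} \<Longrightarrow> 0 \<le> picard_limit t z"
  using picard_bounds by (intro LIMSEQ_le_const[OF picard_tendsto]) blast+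

lemma picard_limit_integral_equation:
  assumes t: "t \<in> {0..s}"
  shows "(\<lambda>\<tau>. \<Sum>x\<in>UNIV. N \<tau> z x * picard_limit \<tau> x) integrable_on {t..s}"
    and "picard_limit t z = c z + integral {t..s} (\<lambda>\<tau>. \<Sum>x\<in>UNIV. N \<tau> z x * picard_limit \<tau> x)"
proof -
  let ?F = "\<lambda>k \<tau>. \<Sum>x\<in>UNIV. N \<tau> z x * picard k \<tau> x"
  let ?G = "\<lambda>\<tau>. \<Sum>x\<in>UNIV. N \<tau> z x * picard_limit \<tau> x"
  have bounded: "bounded (range (\<lambda>k. integral {t..s} (?F k)))"
    unfolding bounded_real
  proof (intro exI[of _ "exp (L * (s - t))"] ballI)
    fix y assume "y \<in> range (\<lambda>k. integral {t..s} (?F k))"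
    then obtain k where k: "y = integral {t..s} (?F k)" by auto
    have "0 \<le> y"
      unfolding k using t picard_bounds
      by (intro integral_nonneg picard_rhs_integrable) (auto intro!: sum_nonneg mult_nonneg_nonneg N_nonneg)
    moreover have "y \<le> exp (L * (s - t))"
      using picard_bounds[OF t, of "Suc k" z] c_nonneg[of z] k by simp
    ultimately show "\<bar>y\<bar> \<le> exp (L * (s - t))" by simp
  qed
  have mct: "?G integrable_on {t..s} \<and> (\<lambda>k. integral {t..s} (?F k)) \<longlonglongrightarrow> integral {t..s} ?G"
  proof (rule monotone_convergence_increasing[OF _ _ _ bounded])
    show "?F k integrable_on {t..s}" for k using t by (intro picard_rhs_integrable) auto
    show "?F k \<tau> \<le> ?F (Suc k) \<tau>" if "\<tau> \<in> {t..s}" for k \<tau>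
      using that t by (intro sum_mono mult_left_mono N_nonneg picard_mono) auto
    show "(\<lambda>k. ?F k \<tau>) \<longlonglongrightarrow> ?G \<tau>" if "\<tau> \<in> {t..s}" for \<tau>
      using that t by (intro tendsto_sum tendsto_mult_left picard_tendsto) auto
  qed
  then show "?G integrable_on {t..s}" ..
  have "(\<lambda>k. picard (Suc k) t z) \<longlonglongrightarrow> c z + integral {t..s} ?G"
    using mct by (auto intro: tendsto_add)
  moreover have "(\<lambda>k. picard (Suc k) t z) \<longlonglongrightarrow> picard_limit t z"
    using picard_tendsto[OF t] by (rule LIMSEQ_Suc)
  ultimately show "picard_limit t z = c z + integral {t..s} ?G"
    using LIMSEQ_unique by blast
qed

lemma picard_limit_has_derivative:
  assumes t: "t \<in> {0..s}"
  shows "((\<lambda>t. picard_limit t z) has_real_derivative - (\<Sum>x\<in>UNIV. N t z x * picard_limit t x))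
           (at t within {0..s})"
proof -
  have cont: "continuous_on {0..s} (\<lambda>t. picard_limit t x)" for x
  proof -
    have "continuous_on {0..s} (\<lambda>t. c x + integral {t..s} (\<lambda>\<tau>. \<Sum>y\<in>UNIV. N \<tau> x y * picard_limit \<tau> y))"
      using picard_limit_integral_equation(1)[of 0 x] s_nonneg
      by (intro continuous_on_add continuous_on_const indefinite_integral_continuous_1') auto
    then show ?thesis by (rule continuous_on_eq) (use picard_limit_integral_equation(2) in auto)
  qed
  have "continuous_on {0..s} (\<lambda>\<tau>. \<Sum>x\<in>UNIV. N \<tau> z x * picard_limit \<tau> x)"
    by (intro continuous_on_sum continuous_on_mult N_cont cont)
  from integral_has_real_derivative'[OF this t]
  have "((\<lambda>t. c z + integral {t..s} (\<lambda>\<tau>. \<Sum>x\<in>UNIV. N \<tau> z x * picard_limit \<tau> x))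
          has_real_derivative - (\<Sum>x\<in>UNIV. N t z x * picard_limit t x)) (at t within {0..s})"
    by (auto intro!: derivative_eq_intros)
  then show ?thesis
    by (rule has_field_derivative_transform_within[OF _ zero_less_one t])
      (use picard_limit_integral_equation(2) in auto)
qed

lemma picard_limit_terminal: "picard_limit s z = c z"
  using picard_limit_integral_equation(2)[of s z] s_nonneg by simp

end

lemma rate_matrix_backward_solution:
  fixes B :: "real \<Rightarrow> 's::finite \<Rightarrow> 's \<Rightarrow> real" and c :: "'s \<Rightarrow> real"
  assumes s: "0 \<le> s"
    and B_cont: "\<And>x z. continuous_on {0..s} (\<lambda>t. B t x z)"
    and B_rate: "\<And>t z. t \<in> {0..s} \<Longrightarrow> rate_at (\<lambda>x. B t x z) z"
    and c: "\<And>z. 0 \<le> c z" "\<And>z. c z \<le> 1"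
  obtains g where "\<And>z. g s z = c z" and "\<And>t z. t \<in> {0..s} \<Longrightarrow> 0 \<le> g t z"
    and "\<And>t z. t \<in> {0..s} \<Longrightarrow>
           ((\<lambda>t. g t z) has_real_derivative - (\<Sum>x\<in>UNIV. B t x z * g t x)) (at t within {0..s})"
proof -
  have "bounded ((\<lambda>t. \<Sum>z\<in>UNIV. \<bar>B t z z\<bar>) ` {0..s})"
    by (intro compact_imp_bounded compact_continuous_image continuous_intros B_cont) auto
  then obtain a where a: "\<And>t. t \<in> {0..s} \<Longrightarrow> \<bar>\<Sum>z\<in>UNIV. \<bar>B t z z\<bar>\<bar> \<le> a"
    unfolding bounded_real by blast
  have diag: "- B t z z \<le> a" if "t \<in> {0..s}" for t z
    using member_le_sum[of z UNIV "\<lambda>z. \<bar>B t z z\<bar>"] a[OF that] by auto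
  \<comment> \<open>Shifting the diagonal by \<open>a\<close> makes the matrix nonnegative, so Picard iteration applies;
      the factor \<open>exp (a * (t - s))\<close> undoes the shift.\<close>
  define N where "N t z x = B t x z + (if x = z then a else 0)" for t z x
  have N_row: "(\<Sum>x\<in>UNIV. N t z x * f x) = (\<Sum>x\<in>UNIV. B t x z * f x) + a * f z" for t z f
  proof -
    have "(\<Sum>x\<in>UNIV. (if x = z then a else 0) * f x) = a * f z"
      by (simp add: if_distrib [where f = "\<lambda>b. b * _"] cong: if_cong)
    then show ?thesis unfolding N_def distrib_right sum.distrib by simp
  qed
  interpret backward_picard N c s a
  proof
    show "0 \<le> a" using a[of s] s by (meson abs_ge_zero atLeastAtMost_iff order_refl order_trans)
    show "continuous_on {0..s} (\<lambda>t. N t z x)" for z x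
      unfolding N_def by (intro continuous_intros B_cont)
    show "0 \<le> N t z x" if "t \<in> {0..s}" for t z x
      using diag[OF that, of z] B_rate[OF that, of z] unfolding N_def rate_at_def by auto
    show "(\<Sum>x\<in>UNIV. N t z x) \<le> a" if "t \<in> {0..s}" for t z
      using N_row[of t z "\<lambda>_. 1"] B_rate[OF that, of z] by (simp add: rate_at_def)
  qed (use s c in auto)
  show ?thesis
  proof (rule that[of "\<lambda>t z. exp (a * (t - s)) * picard_limit t z"])
    show "exp (a * (s - s)) * picard_limit s z = c z" for z by (simp add: picard_limit_terminal)
    show "0 \<le> exp (a * (t - s)) * picard_limit t z" if "t \<in> {0..s}" for t z
      using picard_limit_nonneg[OF that] by simp
    show "((\<lambda>t. exp (a * (t - s)) * picard_limit t z) has_real_derivative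
        - (\<Sum>x\<in>UNIV. B t x z * (exp (a * (t - s)) * picard_limit t x))) (at t within {0..s})"
      if "t \<in> {0..s}" for t z
      using picard_limit_has_derivative[OF that, of z]
      by (auto intro!: derivative_eq_intros simp: N_row sum_distrib_left algebra_simps)
  qed
qed

text \<open>The KL divergence, per unit time, between Poisson processes of intensities \<open>a\<close> and \<open>b\<close>.\<close>

definition kl_rate :: "real \<Rightarrow> real \<Rightarrow> real" where
  "kl_rate a b = a * ln (a / b) - a + b"

lemma kl_rate_ge_dual:
  assumes "0 \<le> a" "0 \<le> b" "0 < a \<Longrightarrow> 0 < b" "0 < r"
  shows "a * ln r - b * r + b \<le> kl_rate a b"
proof (cases "a = 0")
  case False
  then have a: "0 < a" and b: "0 < b" using assms by auto
  have "ln (r * b / a) \<le> r * b / a - 1" using a b assms(4) by (intro ln_le_minus_one) simp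
  then have "a * (ln r + ln b - ln a) \<le> a * (r * b / a - 1)"
    using a b assms(4) by (intro mult_left_mono) (auto simp: ln_div ln_mult)
  then show ?thesis using a b by (simp add: kl_rate_def ln_div algebra_simps)
qed (use assms in \<open>simp add: kl_rate_def\<close>)

lemma kl_rate_nonneg: "0 \<le> a \<Longrightarrow> 0 \<le> b \<Longrightarrow> (0 < a \<Longrightarrow> 0 < b) \<Longrightarrow> 0 \<le> kl_rate a b"
  using kl_rate_ge_dual[of a b 1] by simp

lemma generator_log_le_kl_rate:
  fixes a b h :: "'s::finite \<Rightarrow> real"
  assumes a: "rate_at a z" and b: "rate_at b z" and ab: "\<And>x. x \<noteq> z \<Longrightarrow> 0 < a x \<Longrightarrow> 0 < b x"
    and h: "\<And>x. 0 < h x"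
  shows "(\<Sum>x\<in>UNIV. a x * ln (h x)) - (\<Sum>x\<in>UNIV. b x * h x) / h z \<le> (\<Sum>x\<in>UNIV - {z}. kl_rate (a x) (b x))"
proof -
  have ln_ratio: "ln (h x / h z) = ln (h x) - ln (h z)" for x using h[of x] h[of z] by (simp add: ln_div)
  define T where "T x = a x * ln (h x / h z) - b x * (h x / h z) + b x" for x
  have "(\<Sum>x\<in>UNIV. T x) = (\<Sum>x\<in>UNIV. a x * ln (h x)) - (\<Sum>x\<in>UNIV. a x) * ln (h z)
          - (\<Sum>x\<in>UNIV. b x * h x) / h z + (\<Sum>x\<in>UNIV. b x)"
    unfolding T_def ln_ratio
    by (simp add: algebra_simps sum.distrib sum_subtractf sum_distrib_right sum_divide_distrib)
  also have "\<dots> = (\<Sum>x\<in>UNIV. a x * ln (h x)) - (\<Sum>x\<in>UNIV. b x * h x) / h z"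
    using rate_at_sum[OF a] rate_at_sum[OF b] by simp
  finally have "(\<Sum>x\<in>UNIV. a x * ln (h x)) - (\<Sum>x\<in>UNIV. b x * h x) / h z = (\<Sum>x\<in>UNIV - {z}. T x)"
    using h[of z] by (simp add: sum.remove[of UNIV z] T_def)
  also have "\<dots> \<le> (\<Sum>x\<in>UNIV - {z}. kl_rate (a x) (b x))"
    unfolding T_def using h
    by (intro sum_mono kl_rate_ge_dual rate_at_nonneg[OF a] rate_at_nonneg[OF b] ab) auto
  finally show ?thesis .
qed

lemma forward_backward_pairing_constant:
  fixes B :: "real \<Rightarrow> 's::finite \<Rightarrow> 's \<Rightarrow> real"
  assumes "0 \<le> s"
    and q: "\<And>t x. t \<in> {0..s} \<Longrightarrow>
          ((\<lambda>t. q t x) has_real_derivative (\<Sum>z\<in>UNIV. B t x z * q t z)) (at t within {0..s})"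
    and h: "\<And>t z. t \<in> {0..s} \<Longrightarrow>
          ((\<lambda>t. h t z) has_real_derivative - (\<Sum>x\<in>UNIV. B t x z * h t x)) (at t within {0..s})"
  shows "(\<Sum>z\<in>UNIV. q s z * h s z) = (\<Sum>z\<in>UNIV. q 0 z * h 0 z)"
proof -
  have "((\<lambda>t. \<Sum>z\<in>UNIV. q t z * h t z) has_real_derivative 0) (at t within {0..s})"
    if t: "t \<in> {0..s}" for t
  proof -
    have "((\<lambda>t. \<Sum>z\<in>UNIV. q t z * h t z) has_real_derivative
        (\<Sum>z\<in>UNIV. (\<Sum>x\<in>UNIV. B t z x * q t x) * h t z - (\<Sum>x\<in>UNIV. B t x z * h t x) * q t z))
        (at t within {0..s})"
      by (auto intro!: derivative_eq_intros q[OF t] h[OF t])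
    moreover have "(\<Sum>z\<in>UNIV. (\<Sum>x\<in>UNIV. B t z x * q t x) * h t z)
        = (\<Sum>z\<in>UNIV. (\<Sum>x\<in>UNIV. B t x z * h t x) * q t z)"
      unfolding sum_distrib_right sum_distrib_left by (subst sum.swap) (simp add: mult_ac)
    ultimately show ?thesis by (simp add: sum_subtractf)
  qed
  then have "((\<lambda>_. 0) has_integral (\<Sum>z\<in>UNIV. q s z * h s z) - (\<Sum>z\<in>UNIV. q 0 z * h 0 z)) {0..s}"
    using assms(1) by (intro fundamental_theorem_of_calculus)
      (auto simp: has_real_derivative_iff_has_vector_derivative[symmetric])
  then show ?thesis by (simp add: has_integral_0_eq)
qed

locale ctmc_pair =
  fixes A B :: "real \<Rightarrow> 's::finite \<Rightarrow> 's \<Rightarrow> real" and P q :: "real \<Rightarrow> 's \<Rightarrow> real"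
  assumes A_rate: "rate_conditions A" and B_rate: "rate_conditions B"
    and B_pos_if_A_pos: "\<And>t x z. t \<in> {0..<1} \<Longrightarrow> x \<noteq> z \<Longrightarrow> 0 < A t x z \<Longrightarrow> 0 < B t x z"
    and A_gen: "generates A P" and B_gen: "generates B q"
    and same_initial: "P 0 = q 0"
begin

definition expected_kl_rate :: "real \<Rightarrow> real" where
  "expected_kl_rate t = (\<Sum>z\<in>UNIV. P t z * (\<Sum>x\<in>UNIV - {z}. kl_rate (A t x z) (B t x z)))"

lemma expected_kl_rate_nonneg:
  assumes t: "t \<in> {0..<1}"
  shows "0 \<le> expected_kl_rate t"
  unfolding expected_kl_rate_def
proof (intro sum_nonneg mult_nonneg_nonneg)
  fix z x :: 's assume "x \<in> UNIV - {z}"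
  then show "0 \<le> kl_rate (A t x z) (B t x z)"
    using t rate_at_nonneg[OF rate_conditionsD[OF A_rate t]] rate_at_nonneg[OF rate_conditionsD[OF B_rate t]]
    by (intro kl_rate_nonneg B_pos_if_A_pos) auto
qed (use t generates_nonneg[OF A_gen] in auto)

lemma log_backward_solution_growth:
  assumes s: "0 \<le> s" "s < 1"
    and h_pos: "\<And>t z. t \<in> {0..s} \<Longrightarrow> 0 < h t z"
    and h_der: "\<And>t z. t \<in> {0..s} \<Longrightarrow>
          ((\<lambda>t. h t z) has_real_derivative - (\<Sum>x\<in>UNIV. B t x z * h t x)) (at t within {0..s})"
    and I: "I integrable_on {0..s}" "\<And>t. t \<in> {0..s} \<Longrightarrow> I t \<le> - expected_kl_rate t"
  shows "(\<Sum>z\<in>UNIV. P s z * ln (h s z)) - (\<Sum>z\<in>UNIV. P 0 z * ln (h 0 z)) \<le> - integral {0..s} I"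
proof -
  define G' where "G' t = (\<Sum>z\<in>UNIV. (\<Sum>x\<in>UNIV. A t z x * P t x) * ln (h t z)
    + - (\<Sum>x\<in>UNIV. B t x z * h t x) / h t z * P t z)" for t
  have G': "((\<lambda>t. \<Sum>z\<in>UNIV. P t z * ln (h t z)) has_real_derivative G' t) (at t within {0..s})"
    if t: "t \<in> {0..s}" for t
  proof -
    have "((\<lambda>t. P t z) has_real_derivative (\<Sum>x\<in>UNIV. A t z x * P t x)) (at t within {0..s})" for z
      using t s by (intro has_field_derivative_subset[OF generates_has_derivative[OF A_gen]]) auto
    moreover have "((\<lambda>t. ln (h t z)) has_real_derivative - (\<Sum>x\<in>UNIV. B t x z * h t x) / h t z)
        (at t within {0..s})" for z
      using DERIV_ln_divide[THEN DERIV_chain2, OF h_pos[OF t] h_der[OF t]] by simp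
    ultimately show ?thesis
      unfolding G'_def by (intro DERIV_sum DERIV_mult)
  qed
  have G'_le: "G' t \<le> - I t" if t: "t \<in> {0..s}" for t
  proof -
    have t1: "t \<in> {0..<1}" using t s by auto
    have swap: "(\<Sum>z\<in>UNIV. (\<Sum>x\<in>UNIV. A t z x * P t x) * ln (h t z))
        = (\<Sum>z\<in>UNIV. P t z * (\<Sum>x\<in>UNIV. A t x z * ln (h t x)))"
      unfolding sum_distrib_right sum_distrib_left by (subst sum.swap) (simp add: mult_ac)
    have "G' t = (\<Sum>z\<in>UNIV. P t z * (\<Sum>x\<in>UNIV. A t x z * ln (h t x)))
        + (\<Sum>z\<in>UNIV. - (\<Sum>x\<in>UNIV. B t x z * h t x) / h t z * P t z)"
      unfolding G'_def sum.distrib swap ..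
    also have "\<dots> = (\<Sum>z\<in>UNIV. P t z *
        ((\<Sum>x\<in>UNIV. A t x z * ln (h t x)) - (\<Sum>x\<in>UNIV. B t x z * h t x) / h t z))"
      by (simp only: sum.distrib[symmetric]) (simp add: algebra_simps)
    also have "\<dots> \<le> expected_kl_rate t"
      unfolding expected_kl_rate_def
    proof (intro sum_mono mult_left_mono)
      fix z :: 's
      show "(\<Sum>x\<in>UNIV. A t x z * ln (h t x)) - (\<Sum>x\<in>UNIV. B t x z * h t x) / h t z
          \<le> (\<Sum>x\<in>UNIV - {z}. kl_rate (A t x z) (B t x z))"
        using t1 h_pos[OF t] B_pos_if_A_pos[OF t1]
        by (intro generator_log_le_kl_rate rate_conditionsD[OF A_rate] rate_conditionsD[OF B_rate])
      show "0 \<le> P t z" using t1 by (intro generates_nonneg[OF A_gen]) auto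
    qed
    finally show ?thesis using I(2)[OF t] by linarith
  qed
  have ftc: "(G' has_integral (\<Sum>z\<in>UNIV. P s z * ln (h s z)) - (\<Sum>z\<in>UNIV. P 0 z * ln (h 0 z))) {0..s}"
    using s(1) G' by (intro fundamental_theorem_of_calculus)
      (auto simp: has_real_derivative_iff_has_vector_derivative[symmetric])
  have "((\<lambda>t. - I t) has_integral - integral {0..s} I) {0..s}"
    using I(1) by (intro has_integral_neg integrable_integral)
  from has_integral_le[OF ftc this] G'_le show ?thesis by blast
qed

lemma ln_mass_lower_bound:
  assumes s: "0 \<le> s" "s < 1" and e: "0 < e"
    and I: "I integrable_on {0..s}" "\<And>t. t \<in> {0..s} \<Longrightarrow> I t \<le> - expected_kl_rate t"
  shows "(1 - P s x1) * ln e + integral {0..s} I \<le> ln (q s x1 + e)"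
proof -
  have sub: "{0..s} \<subseteq> {0..<1}" "{0..s} \<subseteq> {0..1}" using s by auto
  obtain g where g_s: "\<And>z. g s z = (if z = x1 then 1 else 0)"
    and g_nonneg: "\<And>t z. t \<in> {0..s} \<Longrightarrow> 0 \<le> g t z"
    and g_der: "\<And>t z. t \<in> {0..s} \<Longrightarrow>
          ((\<lambda>t. g t z) has_real_derivative - (\<Sum>x\<in>UNIV. B t x z * g t x)) (at t within {0..s})"
    by (rule rate_matrix_backward_solution[of s B "\<lambda>z. if z = x1 then 1 else 0"])
      (use s sub in \<open>auto intro: continuous_on_subset[OF generates_continuous_rate[OF B_gen]]
          rate_conditionsD[OF B_rate]\<close>)
  \<comment> \<open>The shift by \<open>e\<close> keeps the backward solution positive, so that its logarithm exists.\<close>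
  define h where "h t z = g t z + e" for t z
  have h_pos: "0 < h t z" if "t \<in> {0..s}" for t z
    using g_nonneg[OF that, of z] e by (simp add: h_def)
  have h_der: "((\<lambda>t. h t z) has_real_derivative - (\<Sum>x\<in>UNIV. B t x z * h t x)) (at t within {0..s})"
    if t: "t \<in> {0..s}" for t z
  proof -
    have "(\<Sum>x\<in>UNIV. B t x z) = 0" using t sub by (intro rate_at_sum[OF rate_conditionsD[OF B_rate]]) auto
    then have "(\<Sum>x\<in>UNIV. B t x z * h t x) = (\<Sum>x\<in>UNIV. B t x z * g t x)"
      by (simp add: h_def distrib_left sum.distrib flip: sum_distrib_right)
    then show ?thesis using g_der[OF t, of z] by (auto intro!: derivative_eq_intros simp: h_def)
  qed
  have "(\<Sum>z\<in>UNIV. q s z * h s z) = (\<Sum>z\<in>UNIV. q 0 z * h 0 z)"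
  proof (rule forward_backward_pairing_constant[OF s(1) _ h_der])
    show "((\<lambda>t. q t x) has_real_derivative (\<Sum>z\<in>UNIV. B t x z * q t z)) (at t within {0..s})"
      if "t \<in> {0..s}" for t x
      using that sub by (intro has_field_derivative_subset[OF generates_has_derivative[OF B_gen]]) auto
  qed
  moreover have "(\<Sum>z\<in>UNIV. q s z * h s z) = q s x1 + e"
  proof -
    have "(\<Sum>z\<in>UNIV. q s z * h s z) = (\<Sum>z\<in>UNIV. q s z * (if z = x1 then 1 else 0)) + e * (\<Sum>z\<in>UNIV. q s z)"
      by (simp add: h_def g_s distrib_left sum.distrib sum_distrib_left mult.commute)
    then show ?thesis using generates_sum[OF B_gen, of s] s by (simp add: if_distrib [where f = "\<lambda>b. _ * b"] cong: if_cong)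
  qed
  ultimately have pairing: "q s x1 + e = (\<Sum>z\<in>UNIV. P 0 z * h 0 z)"
    by (simp add: same_initial)
  have jensen: "(\<Sum>z\<in>UNIV. P 0 z * ln (h 0 z)) \<le> ln (\<Sum>z\<in>UNIV. P 0 z * h 0 z)"
    using concave_on_sum[OF finite _ ln_concave, of UNIV "P 0" "h 0"] s h_pos
      generates_sum[OF A_gen] generates_nonneg[OF A_gen] by simp
  have "(1 - P s x1) * ln e = (\<Sum>z\<in>UNIV - {x1}. P s z) * ln e"
    using generates_sum[OF A_gen, of s] s by (simp add: sum.remove[of UNIV x1])
  also have "\<dots> = (\<Sum>z\<in>UNIV. P s z * (if z = x1 then 0 else ln e))"
    by (simp add: sum_distrib_right sum.remove[of UNIV x1] if_distrib [where f = "\<lambda>b. _ * b"] cong: if_cong)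
  also have "\<dots> \<le> (\<Sum>z\<in>UNIV. P s z * ln (h s z))"
    using s e by (intro sum_mono mult_left_mono generates_nonneg[OF A_gen]) (auto simp: h_def g_s)
  finally have terminal: "(1 - P s x1) * ln e \<le> (\<Sum>z\<in>UNIV. P s z * ln (h s z))" .
  have "(\<Sum>z\<in>UNIV. P s z * ln (h s z)) - (\<Sum>z\<in>UNIV. P 0 z * ln (h 0 z)) \<le> - integral {0..s} I"
    using s h_pos h_der I by (rule log_backward_solution_growth)
  then show ?thesis unfolding pairing using jensen terminal by linarith
qed

theorem log_likelihood_lower_bound:
  assumes P_1: "P 1 x1 = 1" and I_int: "set_integrable lborel {0..1} I"
    and I_le: "\<And>t. t \<in> {0..<1} \<Longrightarrow> I t \<le> - expected_kl_rate t"
  shows "0 < q 1 x1 \<and> (LINT t:{0..1}|lborel. I t) \<le> ln (q 1 x1)"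
proof -
  define J where "J = integral {0..1} I"
  have I_int': "I integrable_on {0..1}"
    using set_borel_integral_eq_integral(1)[OF I_int] .
  have before_1: "(1 - P s x1) * ln e + J \<le> ln (q s x1 + e)" if s: "0 \<le> s" "s < 1" and e: "0 < e" for s e
  proof -
    have "I integrable_on {s..1}" by (rule integrable_on_subinterval[OF I_int']) (use s in auto)
    \<comment> \<open>\<open>I\<close> is only known to be nonpositive on \<open>[s,1)\<close>; the endpoint is a null set.\<close>
    then have "((\<lambda>t. if t = 1 then 0 else I t) has_integral integral {s..1} I) {s..1}"
      by (intro has_integral_spike[OF negligible_sing _ integrable_integral]) auto
    then have "integral {s..1} I \<le> 0"
    proof (rule has_integral_le[OF _ has_integral_0])
      fix t assume "t \<in> {s..1}"
      then have "t \<noteq> 1 \<Longrightarrow> t \<in> {0..<1}" using s by auto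
      then show "(if t = 1 then 0 else I t) \<le> 0"
        using I_le expected_kl_rate_nonneg by force
    qed
    moreover have "integral {0..s} I + integral {s..1} I = J"
      unfolding J_def using s I_int' by (intro Henstock_Kurzweil_Integration.integral_combine) auto
    moreover have "(1 - P s x1) * ln e + integral {0..s} I \<le> ln (q s x1 + e)"
      using s e I_le by (intro ln_mass_lower_bound integrable_on_subinterval[OF I_int']) auto
    ultimately show ?thesis by linarith
  qed
  have "exp J \<le> q 1 x1 + e" if e: "0 < e" for e
  proof -
    have "J \<le> ln (q 1 x1 + e)"
    proof (rule tendsto_le[of "at_left 1"])
      have left_limit: "((\<lambda>t. p t x1) \<longlongrightarrow> p 1 x1) (at_left 1)" if "generates u p"
        for u :: "real \<Rightarrow> 's \<Rightarrow> 's \<Rightarrow> real" and p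
        using generates_continuous[OF that, of x1] unfolding continuous_on_def
        by (metis at_within_Icc_at_left atLeastAtMost_iff zero_less_one order_refl zero_le_one)
      show "((\<lambda>s. (1 - P s x1) * ln e + J) \<longlongrightarrow> J) (at_left 1)"
        using tendsto_add[OF tendsto_mult[OF tendsto_diff[OF tendsto_const left_limit[OF A_gen]]
            tendsto_const] tendsto_const, of 1 "ln e" J]
        by (simp add: P_1)
      show "((\<lambda>s. ln (q s x1 + e)) \<longlongrightarrow> ln (q 1 x1 + e)) (at_left 1)"
        using generates_nonneg[OF B_gen, of 1 x1] e
        by (intro tendsto_ln tendsto_add left_limit[OF B_gen] tendsto_const) auto
      show "\<forall>\<^sub>F s in at_left 1. (1 - P s x1) * ln e + J \<le> ln (q s x1 + e)"
        using eventually_at_left_real[of 0 "1::real"] by (rule eventually_mono) (use before_1 e in auto)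
    qed simp
    then show ?thesis
      using generates_nonneg[OF B_gen, of 1 x1] e by (simp add: ln_ge_iff)
  qed
  then have "exp J \<le> q 1 x1" by (rule field_le_epsilon)
  moreover have "(LINT t:{0..1}|lborel. I t) = J"
    unfolding J_def by (rule set_borel_integral_eq_integral(2)[OF I_int])
  moreover have "0 < q 1 x1" using \<open>exp J \<le> q 1 x1\<close> exp_gt_zero[of J] by linarith
  ultimately show ?thesis by (simp add: ln_ge_iff)
qed

end

definition agree_off :: "'d \<Rightarrow> ('d \<Rightarrow> 'a) \<Rightarrow> ('d \<Rightarrow> 'a) \<Rightarrow> bool" where
  "agree_off i w z \<longleftrightarrow> (\<forall>j. j \<noteq> i \<longrightarrow> w j = z j)"

lemma agree_off_sym: "agree_off i w z \<longleftrightarrow> agree_off i z w"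
  unfolding agree_off_def by auto

lemma agree_off_unique: "agree_off i w z \<Longrightarrow> agree_off k w z \<Longrightarrow> i \<noteq> k \<Longrightarrow> w = z"
  unfolding agree_off_def by (metis ext)

lemma agree_off_neq: "agree_off i w z \<Longrightarrow> w \<noteq> z \<Longrightarrow> w i \<noteq> z i"
  unfolding agree_off_def by (metis ext)

lemma sum_agree_off:
  fixes g :: "('d::finite \<Rightarrow> 'a::finite) \<Rightarrow> 'b::comm_monoid_add"
  shows "(\<Sum>w\<in>UNIV. if agree_off i w z then g w else 0) = (\<Sum>y\<in>UNIV. g (z(i := y)))"
proof -
  have "{w. agree_off i w z} = range (\<lambda>y. z(i := y))"
    unfolding agree_off_def by (auto simp: image_iff fun_eq_iff)
  moreover have "inj (\<lambda>y. z(i := y))" by (auto simp: inj_on_def fun_eq_iff split: if_splits)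
  ultimately show ?thesis
    by (simp add: sum.inter_filter[symmetric] sum.reindex)
qed

lemma factorized_velocity_agree_off:
  "factorized_velocity u t w z = (\<Sum>i\<in>UNIV. if agree_off i w z then u i t (w i) z else 0)"
proof -
  have "(\<Prod>j\<in>UNIV - {i}. if w j = z j then 1 else 0 :: real) = (if agree_off i w z then 1 else 0)" for i
    unfolding agree_off_def by (auto intro: prod.neutral prod_zero)
  then show ?thesis unfolding factorized_velocity_def by (simp add: if_distrib [where f = "\<lambda>b. _ * b"] cong: if_cong)
qed

lemma factorized_velocity_single_change:
  assumes "agree_off i w z" "w \<noteq> z"
  shows "factorized_velocity u t w z = u i t (w i) z"
proof -
  have "(\<Sum>k\<in>UNIV. if agree_off k w z then u k t (w k) z else 0) = (\<Sum>k\<in>UNIV. if k = i then u k t (w k) z else 0)"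
    using assms by (intro sum.cong) (auto dest: agree_off_unique[OF assms(1)])
  then show ?thesis by (simp add: factorized_velocity_agree_off)
qed

lemma factorized_velocity_multi_change:
  "(\<And>i. \<not> agree_off i w z) \<Longrightarrow> factorized_velocity u t w z = 0"
  by (simp add: factorized_velocity_agree_off)

lemma rate_at_factorized_velocity:
  assumes "\<And>i. rate_at (\<lambda>y. u i t y z) (z i)"
  shows "rate_at (\<lambda>w. factorized_velocity u t w z) z"
  unfolding rate_at_def
proof safe
  fix w assume "w \<noteq> z"
  then show "0 \<le> factorized_velocity u t w z"
    using assms unfolding factorized_velocity_agree_off rate_at_def
    by (intro sum_nonneg) (auto dest: agree_off_neq[OF _ \<open>w \<noteq> z\<close>])
next
  show "(\<Sum>w\<in>UNIV. factorized_velocity u t w z) = 0"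
    using assms unfolding factorized_velocity_agree_off rate_at_def
    by (subst sum.swap) (simp add: sum_agree_off)
qed

lemma factorized_velocity_pos:
  assumes "\<And>i y. y \<noteq> z i \<Longrightarrow> 0 < u i t y z \<Longrightarrow> 0 < v i t y z"
    and "w \<noteq> z" "0 < factorized_velocity u t w z"
  shows "0 < factorized_velocity v t w z"
proof (cases "\<exists>i. agree_off i w z")
  case True
  then obtain i where i: "agree_off i w z" by blast
  then show ?thesis
    using assms agree_off_neq[OF i assms(2)] by (simp add: factorized_velocity_single_change)
qed (use assms(3) factorized_velocity_multi_change[of w z u t] in auto)

lemma sum_offdiag_factorized_velocity:
  fixes F :: "real \<Rightarrow> real \<Rightarrow> 'b::cancel_comm_monoid_add"
  assumes "F 0 0 = 0"
  shows "(\<Sum>w\<in>UNIV - {z}. F (factorized_velocity u t w z) (factorized_velocity v t w z))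
       = (\<Sum>i\<in>UNIV. \<Sum>y\<in>UNIV - {z i}. F (u i t y z) (v i t y z))"
proof -
  define H where "H i w = (if agree_off i w z then F (u i t (w i) z) (v i t (w i) z) else 0)" for i w
  have "F (factorized_velocity u t w z) (factorized_velocity v t w z) = (\<Sum>i\<in>UNIV. H i w)"
    if "w \<noteq> z" for w
  proof (cases "\<exists>i. agree_off i w z")
    case True
    then obtain i where i: "agree_off i w z" by blast
    have "(\<Sum>k\<in>UNIV. H k w) = (\<Sum>k\<in>UNIV. if k = i then H k w else 0)"
      using that by (intro sum.cong) (auto simp: H_def dest: agree_off_unique[OF i])
    then show ?thesis using i that by (simp add: H_def factorized_velocity_single_change)
  qed (use assms in \<open>simp add: H_def factorized_velocity_multi_change\<close>)
  then have "(\<Sum>w\<in>UNIV - {z}. F (factorized_velocity u t w z) (factorized_velocity v t w z))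
      = (\<Sum>i\<in>UNIV. \<Sum>w\<in>UNIV - {z}. H i w)"
    by (simp add: sum.swap[of _ UNIV])
  also have "\<dots> = (\<Sum>i\<in>UNIV. \<Sum>y\<in>UNIV - {z i}. F (u i t y z) (v i t y z))"
  proof (rule sum.cong[OF refl])
    fix i
    have "(\<Sum>w\<in>UNIV. H i w) = (\<Sum>y\<in>UNIV. F (u i t y z) (v i t y z))"
      unfolding H_def by (simp add: sum_agree_off)
    moreover have "H i z = F (u i t (z i) z) (v i t (z i) z)" by (simp add: H_def agree_off_def)
    ultimately show "(\<Sum>w\<in>UNIV - {z}. H i w) = (\<Sum>y\<in>UNIV - {z i}. F (u i t y z) (v i t y z))"
      by (simp add: sum.remove[of UNIV z] sum.remove[of UNIV "z i"])
  qed
  finally show ?thesis .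
qed

lemma product_path_fun_upd:
  "product_path pc t (x(i := y)) = pc i t y * (\<Prod>j\<in>UNIV - {i}. pc j t (x j))"
  unfolding product_path_def by (subst prod.remove[of UNIV i]) (auto intro!: prod.cong)

lemma product_path_has_derivative:
  fixes uc :: "'d::finite \<Rightarrow> real \<Rightarrow> 'a::finite \<Rightarrow> 'a \<Rightarrow> real"
  assumes "\<And>i a. ((\<lambda>s. pc i s a) has_real_derivative (\<Sum>b\<in>UNIV. uc i t a b * pc i t b)) (at t within S)"
  shows "((\<lambda>s. product_path pc s x) has_real_derivative
           (\<Sum>z\<in>UNIV. factorized_velocity (\<lambda>i t y z. uc i t y (z i)) t x z * product_path pc t z))
         (at t within S)"
proof -
  define D where "D i = (\<Sum>b\<in>UNIV. uc i t (x i) b * pc i t b)" for i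
  define R where "R i = (\<Prod>j\<in>UNIV - {i}. pc j t (x j))" for i
  have "((\<lambda>s. \<Prod>i\<in>UNIV. pc i s (x i)) has_derivative (\<lambda>h. \<Sum>i\<in>UNIV. D i * h * R i)) (at t within S)"
    unfolding R_def
    by (rule has_derivative_prod) (use assms in \<open>auto simp: D_def has_field_derivative_def\<close>)
  moreover have "(\<lambda>h. \<Sum>i\<in>UNIV. D i * h * R i) = (*) (\<Sum>i\<in>UNIV. D i * R i)"
    by (auto simp: fun_eq_iff sum_distrib_left sum_distrib_right mult_ac)
  ultimately have "((\<lambda>s. product_path pc s x) has_real_derivative (\<Sum>i\<in>UNIV. D i * R i)) (at t within S)"
    unfolding has_field_derivative_def product_path_def by simp
  moreover have "(\<Sum>z\<in>UNIV. factorized_velocity (\<lambda>i t y z. uc i t y (z i)) t x z * product_path pc t z)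
      = (\<Sum>i\<in>UNIV. \<Sum>z\<in>UNIV. if agree_off i z x then uc i t (x i) (z i) * product_path pc t z else 0)"
    unfolding factorized_velocity_agree_off sum_distrib_right
    by (subst sum.swap) (auto intro!: sum.cong simp: agree_off_sym)
  moreover have "\<dots> = (\<Sum>i\<in>UNIV. D i * R i)"
    by (simp add: sum_agree_off product_path_fun_upd D_def R_def sum_distrib_left mult_ac)
  ultimately show ?thesis by simp
qed

lemma generates_product_path:
  fixes uc :: "'d::finite \<Rightarrow> real \<Rightarrow> 'a::finite \<Rightarrow> 'a \<Rightarrow> real"
  assumes gen: "\<And>i. generates (uc i) (pc i)"
  shows "generates (factorized_velocity (\<lambda>i t y z. uc i t y (z i))) (product_path pc)"
  unfolding generates_def prob_path_def
proof (intro conjI ballI allI)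
  show "continuous_on {0..<1} (\<lambda>t. factorized_velocity (\<lambda>i t y z. uc i t y (z i)) t w z)" for w z
    unfolding factorized_velocity_def by (intro continuous_intros generates_continuous_rate[OF gen])
  show "continuous_on {0..1} (\<lambda>t. product_path pc t x)" for x
    unfolding product_path_def by (intro continuous_on_prod generates_continuous[OF gen])
  fix t :: real assume t: "t \<in> {0..1}"
  show "0 \<le> product_path pc t x" for x
    unfolding product_path_def using t by (intro prod_nonneg generates_nonneg[OF gen]) auto
  have "(\<Prod>i\<in>UNIV. \<Sum>a\<in>UNIV. pc i t a) = (\<Sum>x\<in>PiE UNIV (\<lambda>_. UNIV). \<Prod>i\<in>UNIV. pc i t (x i))"
    by (rule prod_sum_PiE) auto
  then show "(\<Sum>x\<in>UNIV. product_path pc t x) = 1"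
    using generates_sum[OF gen t] by (simp add: product_path_def)
next
  fix t :: real and x assume "t \<in> {0..<1}"
  then show "((\<lambda>s. product_path pc s x) has_real_derivative
      (\<Sum>z\<in>UNIV. factorized_velocity (\<lambda>i t y z. uc i t y (z i)) t x z * product_path pc t z))
      (at t within {0..1})"
    by (intro product_path_has_derivative generates_has_derivative[OF gen])
qed

lemma sum_kl_rate_rate_at:
  assumes r: "rate_at r a" and r': "rate_at r' a" and pos: "\<And>y. y \<noteq> a \<Longrightarrow> 0 < r y \<Longrightarrow> 0 < r' y"
  shows "(\<Sum>y\<in>UNIV - {a}. kl_rate (r y) (r' y))
       = - (r' a - r a + (\<Sum>y\<in>UNIV - {a}. r y * ln (r' y / r y)))"
proof -
  have "r y * ln (r y / r' y) = - (r y * ln (r' y / r y))" if "y \<noteq> a" for y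
  proof (cases "r y = 0")
    case False
    then have "0 < r y" "0 < r' y" using rate_at_nonneg[OF r that] pos[OF that] by auto
    then show ?thesis by (simp add: ln_div algebra_simps)
  qed simp
  moreover have "(\<Sum>y\<in>UNIV - {a}. r y) = - r a" "(\<Sum>y\<in>UNIV - {a}. r' y) = - r' a"
    using rate_at_sum[OF r] rate_at_sum[OF r'] by (simp_all add: sum.remove[of UNIV a])
  ultimately show ?thesis
    by (simp add: kl_rate_def sum.distrib sum_subtractf sum_negf)
qed

lemma sum_offdiag_kl_rate_factorized_velocity:
  assumes uc: "\<And>i. rate_at (\<lambda>y. uc i t y (z i)) (z i)" and u: "\<And>i. rate_at (\<lambda>y. u i t y z) (z i)"
    and pos: "\<And>i y. y \<noteq> z i \<Longrightarrow> 0 < uc i t y (z i) \<Longrightarrow> 0 < u i t y z"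
  shows "(\<Sum>w\<in>UNIV - {z}. kl_rate (factorized_velocity (\<lambda>i t y z. uc i t y (z i)) t w z)
                                   (factorized_velocity u t w z))
       = - (\<Sum>i\<in>UNIV. u i t (z i) z - uc i t (z i) (z i)
              + (\<Sum>y\<in>UNIV - {z i}. uc i t y (z i) * ln (u i t y z / uc i t y (z i))))"
proof -
  have "(\<Sum>w\<in>UNIV - {z}. kl_rate (factorized_velocity (\<lambda>i t y z. uc i t y (z i)) t w z)
                                 (factorized_velocity u t w z))
      = (\<Sum>i\<in>UNIV. \<Sum>y\<in>UNIV - {z i}. kl_rate (uc i t y (z i)) (u i t y z))"
    by (rule sum_offdiag_factorized_velocity) (simp add: kl_rate_def)
  also have "\<dots> = - (\<Sum>i\<in>UNIV. u i t (z i) z - uc i t (z i) (z i)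
      + (\<Sum>y\<in>UNIV - {z i}. uc i t y (z i) * ln (u i t y z / uc i t y (z i))))"
    unfolding sum_negf[symmetric] by (intro sum.cong refl sum_kl_rate_rate_at uc u pos)
  finally show ?thesis .
qed

theorem mainTheorem10:
  fixes x1 :: "'d::finite \<Rightarrow> 'a::finite"
    and p :: "'a \<Rightarrow> real"
    and uc :: "'d \<Rightarrow> real \<Rightarrow> 'a \<Rightarrow> 'a \<Rightarrow> real"
    and pc :: "'d \<Rightarrow> real \<Rightarrow> 'a \<Rightarrow> real"
    and u :: "'d \<Rightarrow> real \<Rightarrow> 'a \<Rightarrow> ('d \<Rightarrow> 'a) \<Rightarrow> real"
    and q :: "real \<Rightarrow> ('d \<Rightarrow> 'a) \<Rightarrow> real"
  assumes uc_rate: "\<And>i. rate_conditions (uc i)"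
    and uc_gen: "\<And>i. generates (uc i) (pc i)"
    and pc_0: "\<And>i. pc i 0 = p"
    and pc_1: "\<And>i. pc i 1 = (\<lambda>a. if a = x1 i then 1 else 0)"
    and u_rate: "\<And>i z t. t \<in> {0..<1} \<Longrightarrow> rate_at (\<lambda>y. u i t y z) (z i)"
    and u_pos: "\<And>i z t y. t \<in> {0..<1} \<Longrightarrow> y \<noteq> z i \<Longrightarrow> uc i t y (z i) > 0 \<Longrightarrow> u i t y z > 0"
    and q_gen: "generates (factorized_velocity u) q"
    and q_0: "q 0 = (\<lambda>x. \<Prod>i\<in>UNIV. p (x i))"
  shows "set_integrable lborel {0..1}
           (\<lambda>t. \<Sum>x\<in>UNIV. product_path pc t x *
              (\<Sum>i\<in>UNIV. u i t (x i) x - uc i t (x i) (x i)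
                 + (\<Sum>y\<in>UNIV - {x i}. uc i t y (x i) * ln (u i t y x / uc i t y (x i)))))
         \<longrightarrow> q 1 x1 > 0 \<and>
             ln (q 1 x1) \<ge>
             (LINT t:{0..1}|lborel. \<Sum>x\<in>UNIV. product_path pc t x *
              (\<Sum>i\<in>UNIV. u i t (x i) x - uc i t (x i) (x i)
                 + (\<Sum>y\<in>UNIV - {x i}. uc i t y (x i) * ln (u i t y x / uc i t y (x i)))))"
proof -
  let ?P = "product_path pc" and ?A = "factorized_velocity (\<lambda>i t y z. uc i t y (z i))"
  define I where "I = (\<lambda>t. \<Sum>x\<in>UNIV. product_path pc t x *
    (\<Sum>i\<in>UNIV. u i t (x i) x - uc i t (x i) (x i)
       + (\<Sum>y\<in>UNIV - {x i}. uc i t y (x i) * ln (u i t y x / uc i t y (x i)))))"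
  interpret ctmc_pair ?A "factorized_velocity u" ?P q
  proof
    show "rate_conditions ?A"
      unfolding rate_conditions_def
      by (intro ballI allI rate_at_factorized_velocity rate_conditionsD[OF uc_rate])
    show "rate_conditions (factorized_velocity u)"
      unfolding rate_conditions_def by (intro ballI allI rate_at_factorized_velocity u_rate)
    show "0 < factorized_velocity u t x z" if "t \<in> {0..<1}" "x \<noteq> z" "0 < ?A t x z" for t x z
      using that(2,3) u_pos[OF that(1)] by (rule factorized_velocity_pos[rotated])
    show "generates ?A ?P" using uc_gen by (rule generates_product_path)
    show "?P 0 = q 0" by (simp add: fun_eq_iff product_path_def pc_0 q_0)
  qed (fact q_gen)
  have "I t = - expected_kl_rate t" if "t \<in> {0..<1}" for t
    using sum_offdiag_kl_rate_factorized_velocity[where uc = uc and u = u and t = t,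
        OF rate_conditionsD[OF uc_rate that] u_rate[OF that] u_pos[OF that]]
    by (simp add: I_def expected_kl_rate_def sum_negf)
  moreover have "?P 1 x1 = 1" by (simp add: product_path_def pc_1)
  ultimately have "set_integrable lborel {0..1} I \<longrightarrow> 0 < q 1 x1 \<and> (LINT t:{0..1}|lborel. I t) \<le> ln (q 1 x1)"
    by (intro impI log_likelihood_lower_bound) auto
  then show ?thesis unfolding I_def .
qed

end
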